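(* Let $G=\langle a_1,a_2,\dots,a_n\rangle$ be a finite semi-3-abelian 3-group with $|G/\Phi(G)|=3^{n}$. Then $\Omega_{1}(G)\le Z_{n+1}(G)$. Moreover, if $x=a_i^{m}\in\Omega_{1}(G)$ for some $1\le i\le n$ and some positive integer $m$, then $x\in Z_{n}(G)$.
   Context: A finite 3-group $G$ is semi-3-abelian if for all $a,b\in G$: $(ab)^{3}=1$ if and only if $a^{3}b^{3}=1$. $\Omega_{1}(G)=\langle g\in G : g^{3}=1\rangle$. $\Phi(G)$ is the Frattini subgroup and $Z_k(G)$ is the $k$-th term of the upper central series ($Z_0=1$, $Z_{k+1}/Z_k=Z(G/Z_k)$). *)

theory Defs
  imports "HOL-Algebra.Algebra"
begin

definition maximal_subgroup :: "('a, 'b) monoid_scheme \<Rightarrow> 'a set \<Rightarrow> bool" where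
  "maximal_subgroup G H \<longleftrightarrow> subgroup H G \<and> H \<noteq> carrier G \<and>
     (\<forall>K. subgroup K G \<and> H \<subseteq> K \<longrightarrow> K = H \<or> K = carrier G)"

text \<open>Frattini subgroup: intersection of all maximal subgroups (the whole group if there are none).\<close>
definition Frattini :: "('a, 'b) monoid_scheme \<Rightarrow> 'a set" where
  "Frattini G = carrier G \<inter> \<Inter>{H. maximal_subgroup G H}"

text \<open>Upper central series: Z_0 = 1, and x in Z_(k+1) iff xZ_k is central in G/Z_k,
  i.e. all commutators [x,y] lie in Z_k.\<close>
primrec upper_central :: "('a, 'b) monoid_scheme \<Rightarrow> nat \<Rightarrow> 'a set" where
  "upper_central G 0 = {\<one>\<^bsub>G\<^esub>}"
| "upper_central G (Suc k) = {x \<in> carrier G. \<forall>y \<in> carrier G.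
      x \<otimes>\<^bsub>G\<^esub> y \<otimes>\<^bsub>G\<^esub> inv\<^bsub>G\<^esub> x \<otimes>\<^bsub>G\<^esub> inv\<^bsub>G\<^esub> y \<in> upper_central G k}"

definition Omega1 :: "('a, 'b) monoid_scheme \<Rightarrow> 'a set" where
  "Omega1 G = generate G {g \<in> carrier G. g [^]\<^bsub>G\<^esub> (3::nat) = \<one>\<^bsub>G\<^esub>}"

definition semi_3_abelian :: "('a, 'b) monoid_scheme \<Rightarrow> bool" where
  "semi_3_abelian G \<longleftrightarrow> (\<forall>a \<in> carrier G. \<forall>b \<in> carrier G.
     (a \<otimes>\<^bsub>G\<^esub> b) [^]\<^bsub>G\<^esub> (3::nat) = \<one>\<^bsub>G\<^esub> \<longleftrightarrow>
     a [^]\<^bsub>G\<^esub> (3::nat) \<otimes>\<^bsub>G\<^esub> b [^]\<^bsub>G\<^esub> (3::nat) = \<one>\<^bsub>G\<^esub>)"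

end

theory Submission
  imports Defs
begin

text \<open>
In a semi-3-abelian group, \<open>(g x)^3 = g^3\<close> whenever \<open>x^3 = 1\<close>; expanding the cube gives
\<open>x \<cdot> g x g^-1 \<cdot> g^2 x g^-2 = 1\<close>, so \<open>x\<close> commutes with its conjugates and the normal closure
\<open>N\<close> of any \<open>y \<in> \<Omega>\<^sub>1(G)\<close> is elementary abelian. Written additively, every \<open>g\<close> acts on \<open>N\<close>
with \<open>1 + g + g^2 = 0\<close>, so \<open>A = g - 1\<close> (the map \<open>z \<mapsto> [g,z]\<close>) satisfies \<open>A^2 = 0\<close>, and the
maps of any two elements anticommute. If \<open>y\<close> is centralized by the generators \<open>a\<^sub>l\<close> with
\<open>l \<notin> J\<close>, then for \<open>i \<in> J\<close> the element \<open>[a\<^sub>i,y]\<close> is centralized by all \<open>a\<^sub>l\<close> with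
\<open>l \<notin> J - {i}\<close>, and commutators of \<open>y\<close> with arbitrary words in the generators stay in the
subgroup generated by such elements. Induction on \<open>|J|\<close> puts \<open>y\<close> into \<open>Z_(|J|+1)(G)\<close>;
take \<open>J = {1..n}\<close>, and \<open>J = {1..n} - {i}\<close> for a power of \<open>a\<^sub>i\<close>.
\<close>

context group
begin

lemma mult_inv_cancel_left [simp]: "x \<in> carrier G \<Longrightarrow> y \<in> carrier G \<Longrightarrow> x \<otimes> (inv x \<otimes> y) = y"
  by (simp add: m_assoc[symmetric])

lemma inv_mult_cancel_left [simp]: "x \<in> carrier G \<Longrightarrow> y \<in> carrier G \<Longrightarrow> inv x \<otimes> (x \<otimes> y) = y"
  by (simp add: m_assoc[symmetric])

definition conjugate :: "'a \<Rightarrow> 'a \<Rightarrow> 'a" where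
  "conjugate g z = g \<otimes> z \<otimes> inv g"

definition commutator :: "'a \<Rightarrow> 'a \<Rightarrow> 'a" where
  "commutator x y = x \<otimes> y \<otimes> inv x \<otimes> inv y"

lemma conjugate_closed [simp]:
  "g \<in> carrier G \<Longrightarrow> z \<in> carrier G \<Longrightarrow> conjugate g z \<in> carrier G"
  by (simp add: conjugate_def)

lemma conjugate_one [simp]: "g \<in> carrier G \<Longrightarrow> conjugate g \<one> = \<one>"
  by (simp add: conjugate_def)

lemma conjugate_by_one [simp]: "z \<in> carrier G \<Longrightarrow> conjugate \<one> z = z"
  by (simp add: conjugate_def)

lemma commutator_one_left [simp]: "y \<in> carrier G \<Longrightarrow> commutator \<one> y = \<one>"
  by (simp add: commutator_def)

lemma commutator_one_right [simp]: "x \<in> carrier G \<Longrightarrow> commutator x \<one> = \<one>"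
  by (simp add: commutator_def)

lemma commutator_closed [simp]:
  "x \<in> carrier G \<Longrightarrow> y \<in> carrier G \<Longrightarrow> commutator x y \<in> carrier G"
  by (simp add: commutator_def)

lemma commutator_eq_conjugate_mult_inv:
  "commutator g z = conjugate g z \<otimes> inv z"
  by (simp add: commutator_def conjugate_def)

lemma inv_commutator:
  "x \<in> carrier G \<Longrightarrow> y \<in> carrier G \<Longrightarrow> inv (commutator x y) = commutator y x"
  by (simp add: commutator_def inv_mult_group m_assoc)

lemma commutator_nat_pow_self:
  assumes "x \<in> carrier G" shows "commutator x (x [^] (m::nat)) = \<one>"
proof -
  have "x \<otimes> x [^] m = x [^] m \<otimes> x" using assms by (metis nat_pow_Suc nat_pow_Suc2)
  then have "commutator x (x [^] m) = x [^] m \<otimes> (x \<otimes> inv x) \<otimes> inv (x [^] m)"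
    using assms by (simp add: commutator_def m_assoc)
  then show ?thesis using assms by simp
qed

lemma commutator_inv_left_conjugate:
  "x \<in> carrier G \<Longrightarrow> y \<in> carrier G \<Longrightarrow>
    commutator (inv x) y = conjugate (inv x) (inv (commutator x y))"
  by (simp add: commutator_def conjugate_def inv_mult_group m_assoc)

lemma commutator_mult_left_conjugate:
  "x \<in> carrier G \<Longrightarrow> x' \<in> carrier G \<Longrightarrow> y \<in> carrier G \<Longrightarrow>
    commutator (x \<otimes> x') y = conjugate x (commutator x' y) \<otimes> commutator x y"
  by (simp add: commutator_def conjugate_def inv_mult_group m_assoc)

lemma commutator_conjugate_left:
  "g \<in> carrier G \<Longrightarrow> x \<in> carrier G \<Longrightarrow> y \<in> carrier G \<Longrightarrow>
    commutator (conjugate g x) y = conjugate g (commutator x (inv g \<otimes> y \<otimes> g))"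
  by (simp add: commutator_def conjugate_def inv_mult_group m_assoc)

lemma conjugate_mult:
  "g \<in> carrier G \<Longrightarrow> x \<in> carrier G \<Longrightarrow> y \<in> carrier G \<Longrightarrow>
    conjugate g (x \<otimes> y) = conjugate g x \<otimes> conjugate g y"
  by (simp add: conjugate_def m_assoc)

lemma conjugate_inv:
  "g \<in> carrier G \<Longrightarrow> x \<in> carrier G \<Longrightarrow> conjugate g (inv x) = inv (conjugate g x)"
  by (simp add: conjugate_def m_assoc inv_mult_group)

lemma conjugate_conjugate:
  "g \<in> carrier G \<Longrightarrow> h \<in> carrier G \<Longrightarrow> x \<in> carrier G \<Longrightarrow>
    conjugate g (conjugate h x) = conjugate (g \<otimes> h) x"
  by (simp add: conjugate_def m_assoc inv_mult_group)

lemma conjugate_cube: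
  "g \<in> carrier G \<Longrightarrow> x \<in> carrier G \<Longrightarrow>
    conjugate g x [^] (3::nat) = conjugate g (x [^] (3::nat))"
  by (simp add: numeral_3_eq_3 conjugate_mult)

lemma mem_upper_central_Suc:
  "x \<in> upper_central G (Suc k) \<longleftrightarrow>
    x \<in> carrier G \<and> (\<forall>y \<in> carrier G. commutator x y \<in> upper_central G k)"
  by (simp add: commutator_def)

lemma upper_central_normal: "upper_central G k \<lhd> G"
proof (induction k)
  case 0
  then show ?case using one_is_normal by simp
next
  case (Suc k)
  interpret Z: normal "upper_central G k" G by (rule Suc)
  have conjugate_Z: "conjugate g z \<in> upper_central G k"
    if "g \<in> carrier G" "z \<in> upper_central G k" for g z
    using that unfolding conjugate_def by (rule Z.inv_op_closed2)
  note mem = mem_upper_central_Suc[of _ k]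
  have subgroup: "subgroup (upper_central G (Suc k)) G"
  proof (rule subgroupI)
    show "upper_central G (Suc k) \<subseteq> carrier G" by auto
    show "upper_central G (Suc k) \<noteq> {}"
      using mem[of \<one>] by (auto simp: commutator_def)
  next
    fix x x' assume "x \<in> upper_central G (Suc k)" "x' \<in> upper_central G (Suc k)"
    then show "inv x \<in> upper_central G (Suc k)" "x \<otimes> x' \<in> upper_central G (Suc k)"
      unfolding mem
      by (auto simp: commutator_inv_left_conjugate commutator_mult_left_conjugate intro!: conjugate_Z)
  qed
  show ?case
  proof (rule normal_invI[OF subgroup])
    fix g h assume "g \<in> carrier G" "h \<in> upper_central G (Suc k)"
    then show "g \<otimes> h \<otimes> inv g \<in> upper_central G (Suc k)"
      unfolding mem conjugate_def[symmetric]
      by (auto simp: commutator_conjugate_left intro!: conjugate_Z)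
  qed
qed

lemma upper_central_SucI:
  assumes "z \<in> carrier G" and "\<And>g. g \<in> carrier G \<Longrightarrow> commutator g z \<in> upper_central G k"
  shows "z \<in> upper_central G (Suc k)"
proof -
  interpret Z: normal "upper_central G k" G by (rule upper_central_normal)
  have "commutator z g \<in> upper_central G k" if "g \<in> carrier G" for g
    using Z.m_inv_closed[OF assms(2)[OF that]] inv_commutator[OF that assms(1)] by simp
  then show ?thesis
    unfolding mem_upper_central_Suc using assms(1) by blast
qed

lemma commute_generate:
  assumes S: "S \<subseteq> carrier G" and x: "x \<in> carrier G"
    and commutes: "\<And>s. s \<in> S \<Longrightarrow> x \<otimes> s = s \<otimes> x" and y: "y \<in> generate G S"
  shows "x \<otimes> y = y \<otimes> x"
  using y
proof (induction y rule: generate.induct)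
  case one
  then show ?case using x by simp
next
  case (incl s)
  then show ?case by (rule commutes)
next
  case (inv s)
  then have s: "s \<in> carrier G" and "x \<otimes> s = s \<otimes> x" using S commutes by auto
  then have "inv s \<otimes> (x \<otimes> s) \<otimes> inv s = inv s \<otimes> (s \<otimes> x) \<otimes> inv s" by simp
  then show ?case using x s by (simp add: m_assoc)
next
  case (eng s t)
  have s: "s \<in> carrier G" and t: "t \<in> carrier G"
    using eng.hyps generate_in_carrier[OF S] by auto
  have "x \<otimes> (s \<otimes> t) = s \<otimes> x \<otimes> t" using eng.IH(1) x s t by (simp add: m_assoc[symmetric])
  also have "\<dots> = s \<otimes> t \<otimes> x" using eng.IH(2) x s t by (simp add: m_assoc)
  finally show ?case .
qed

lemma generate_commute:
  assumes S: "S \<subseteq> carrier G" and commutes: "\<And>s t. s \<in> S \<Longrightarrow> t \<in> S \<Longrightarrow> s \<otimes> t = t \<otimes> s"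
    and x: "x \<in> generate G S" and y: "y \<in> generate G S"
  shows "x \<otimes> y = y \<otimes> x"
proof (rule commute_generate[OF S _ _ y])
  show "x \<in> carrier G" using x generate_in_carrier[OF S] by blast
  show "x \<otimes> s = s \<otimes> x" if "s \<in> S" for s
    using commute_generate[OF S _ _ x, of s] that S commutes by auto
qed

definition normal_closure :: "'a \<Rightarrow> 'a set" where
  "normal_closure y = generate G {conjugate g y | g. g \<in> carrier G}"

lemma normal_closure_normal:
  assumes "y \<in> carrier G" shows "normal_closure y \<lhd> G"
  unfolding normal_closure_def
proof (rule normal_generateI)
  show "{conjugate g y | g. g \<in> carrier G} \<subseteq> carrier G" using assms by auto
  fix h g assume "h \<in> {conjugate g y | g. g \<in> carrier G}" "g \<in> carrier G"
  then show "g \<otimes> h \<otimes> inv g \<in> {conjugate g y | g. g \<in> carrier G}"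
    using assms by (auto simp: conjugate_def[symmetric] conjugate_conjugate)
qed

lemma mem_normal_closure:
  "y \<in> carrier G \<Longrightarrow> y \<in> normal_closure y"
  unfolding normal_closure_def
  by (rule generate.incl) (auto simp: conjugate_def intro!: exI[of _ \<one>])

end

locale semi_3_abelian_group = group G for G (structure) +
  assumes semi_3_abelian: "semi_3_abelian G"
begin

lemma cube_mult_eq_one_iff:
  "a \<in> carrier G \<Longrightarrow> b \<in> carrier G \<Longrightarrow>
    (a \<otimes> b) [^] (3::nat) = \<one> \<longleftrightarrow> a [^] (3::nat) \<otimes> b [^] (3::nat) = \<one>"
  using semi_3_abelian unfolding semi_3_abelian_def by blast

lemma Omega1_eq: "Omega1 G = {x \<in> carrier G. x [^] (3::nat) = \<one>}"
proof
  have "subgroup {x \<in> carrier G. x [^] (3::nat) = \<one>} G"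
  proof (rule subgroupI)
    show "{x \<in> carrier G. x [^] (3::nat) = \<one>} \<subseteq> carrier G" by blast
    have "\<one> \<in> {x \<in> carrier G. x [^] (3::nat) = \<one>}" by simp
    then show "{x \<in> carrier G. x [^] (3::nat) = \<one>} \<noteq> {}" by blast
  next
    fix x y assume "x \<in> {x \<in> carrier G. x [^] (3::nat) = \<one>}" "y \<in> {x \<in> carrier G. x [^] (3::nat) = \<one>}"
    then show "inv x \<in> {x \<in> carrier G. x [^] (3::nat) = \<one>}"
      and "x \<otimes> y \<in> {x \<in> carrier G. x [^] (3::nat) = \<one>}"
      by (simp_all add: cube_mult_eq_one_iff nat_pow_inv)
  qed
  then show "Omega1 G \<subseteq> {x \<in> carrier G. x [^] (3::nat) = \<one>}"
    unfolding Omega1_def by (rule generate_subgroup_incl[OF subset_refl])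
  show "{x \<in> carrier G. x [^] (3::nat) = \<one>} \<subseteq> Omega1 G"
    unfolding Omega1_def by (auto intro: generate.incl)
qed

lemma cube_mult_right_cube_root_one:
  assumes g: "g \<in> carrier G" and x: "x \<in> carrier G" "x [^] (3::nat) = \<one>"
  shows "(g \<otimes> x) [^] (3::nat) = g [^] (3::nat)"
proof -
  have "(inv g \<otimes> (g \<otimes> x)) [^] (3::nat) = \<one>" using g x by simp
  then have "inv g [^] (3::nat) \<otimes> (g \<otimes> x) [^] (3::nat) = \<one>"
    using cube_mult_eq_one_iff[of "inv g" "g \<otimes> x"] g x by (meson inv_closed m_closed)
  then have "inv (g [^] (3::nat)) \<otimes> (g \<otimes> x) [^] (3::nat) = \<one>"
    using g by (simp only: nat_pow_inv)
  then show ?thesis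
    using inv_solve_left'[of \<one> "g [^] (3::nat)" "(g \<otimes> x) [^] (3::nat)"] g x by simp
qed

lemma conjugate_orbit_product:
  assumes g: "g \<in> carrier G" and x: "x \<in> carrier G" "x [^] (3::nat) = \<one>"
  shows "x \<otimes> conjugate g x \<otimes> conjugate g (conjugate g x) = \<one>"
proof -
  have "g \<otimes> x \<otimes> (g \<otimes> x) \<otimes> (g \<otimes> x) = g \<otimes> g \<otimes> g"
    using cube_mult_right_cube_root_one[OF g x] g x by (simp add: numeral_3_eq_3)
  then have "inv g \<otimes> (g \<otimes> x \<otimes> (g \<otimes> x) \<otimes> (g \<otimes> x)) \<otimes> inv g \<otimes> inv g = \<one>"
    using g by (simp add: m_assoc)
  then show ?thesis using g x by (simp add: conjugate_def m_assoc)
qed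

lemma conjugate_commute:
  assumes g: "g \<in> carrier G" and x: "x \<in> carrier G" "x [^] (3::nat) = \<one>"
  shows "x \<otimes> conjugate g x = conjugate g x \<otimes> x"
proof -
  define u where "u = conjugate g x"
  define w where "w = conjugate g u"
  have u: "u \<in> carrier G" and w: "w \<in> carrier G" using g x by (simp_all add: u_def w_def)
  have "x \<otimes> u \<otimes> w = \<one>"
    using conjugate_orbit_product[OF g x] by (simp add: u_def w_def)
  then have "inv w = x \<otimes> u" using x u w by (intro inv_equality) (simp_all add: m_assoc)
  moreover have "inv x \<otimes> inv u \<otimes> inv w = \<one>"
    using conjugate_orbit_product[OF g inv_closed[OF x(1)]] g x
    by (simp add: u_def w_def conjugate_inv nat_pow_inv)
  then have "inv (inv w) = inv x \<otimes> inv u" using x u w by (intro inv_equality) (simp_all add: m_assoc)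
  then have "inv w = u \<otimes> x" using x u w by (simp add: inv_mult_group)
  ultimately show ?thesis by (simp add: u_def)
qed

lemma normal_closure_cube_root_one:
  assumes y: "y \<in> carrier G" "y [^] (3::nat) = \<one>" and z: "z \<in> normal_closure y"
  shows "z [^] (3::nat) = \<one>"
proof -
  have "{conjugate g y | g. g \<in> carrier G} \<subseteq> {x \<in> carrier G. x [^] (3::nat) = \<one>}"
    using y by (auto simp: conjugate_cube)
  then have "normal_closure y \<subseteq> Omega1 G"
    unfolding normal_closure_def Omega1_def by (rule mono_generate)
  then show ?thesis using z by (simp add: Omega1_eq subset_iff)
qed

lemma normal_closure_commute:
  assumes y: "y \<in> carrier G" "y [^] (3::nat) = \<one>"
    and z: "z \<in> normal_closure y" and w: "w \<in> normal_closure y"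
  shows "z \<otimes> w = w \<otimes> z"
  using z w unfolding normal_closure_def
proof (rule generate_commute[rotated 2])
  show "{conjugate g y | g. g \<in> carrier G} \<subseteq> carrier G" using y by auto
  fix s t assume "s \<in> {conjugate g y | g. g \<in> carrier G}" "t \<in> {conjugate g y | g. g \<in> carrier G}"
  then obtain g h where g: "g \<in> carrier G" "s = conjugate g y"
    and h: "h \<in> carrier G" "t = conjugate h y" by blast
  define k where "k = inv h \<otimes> g"
  have k: "k \<in> carrier G" using g h by (simp add: k_def)
  have s: "s = conjugate h (conjugate k y)"
    using g h y by (simp add: k_def conjugate_conjugate m_assoc[symmetric])
  have "conjugate h (conjugate k y) \<otimes> conjugate h y = conjugate h (conjugate k y \<otimes> y)"
    using h k y by (simp add: conjugate_mult)
  also have "\<dots> = conjugate h (y \<otimes> conjugate k y)"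
    using conjugate_commute[OF k y] by simp
  also have "\<dots> = conjugate h y \<otimes> conjugate h (conjugate k y)"
    using h k y by (simp add: conjugate_mult)
  finally show "s \<otimes> t = t \<otimes> s" using s h by simp
qed

end

locale elementary_abelian_normal = semi_3_abelian_group G for G (structure) +
  fixes N :: "'a set"
  assumes N_normal: "N \<lhd> G"
    and N_cube: "z \<in> N \<Longrightarrow> z [^] (3::nat) = \<one>"
    and N_commute: "z \<in> N \<Longrightarrow> w \<in> N \<Longrightarrow> z \<otimes> w = w \<otimes> z"
begin

sublocale N: normal N G by (rule N_normal)

lemma N_left_commute: "z \<in> N \<Longrightarrow> w \<in> N \<Longrightarrow> v \<in> N \<Longrightarrow> z \<otimes> (w \<otimes> v) = w \<otimes> (z \<otimes> v)"
  by (metis N.mem_carrier N_commute m_assoc)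

lemma N_inv_eq_square: "z \<in> N \<Longrightarrow> inv z = z \<otimes> z"
  using N_cube[of z] by (intro inv_equality) (simp_all add: numeral_3_eq_3 m_assoc)

lemma N_cube_cancel: "z \<in> N \<Longrightarrow> z \<otimes> (z \<otimes> z) = \<one>"
  using N_cube[of z] by (simp add: numeral_3_eq_3 m_assoc)

lemma N_cube_cancel_left: "z \<in> N \<Longrightarrow> w \<in> carrier G \<Longrightarrow> z \<otimes> (z \<otimes> (z \<otimes> w)) = w"
  using N_cube_cancel[of z] by (simp add: m_assoc[symmetric])

lemmas N_normalize = m_assoc N_commute N_left_commute N_inv_eq_square N_cube_cancel N_cube_cancel_left

lemma conjugate_N [simp]: "g \<in> carrier G \<Longrightarrow> z \<in> N \<Longrightarrow> conjugate g z \<in> N"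
  unfolding conjugate_def by (rule N.inv_op_closed2)

lemma commutator_N [simp]: "g \<in> carrier G \<Longrightarrow> z \<in> N \<Longrightarrow> commutator g z \<in> N"
  by (simp add: commutator_eq_conjugate_mult_inv)

lemma conjugate_conjugate_N:
  assumes g: "g \<in> carrier G" and z: "z \<in> N"
  shows "conjugate g (conjugate g z) = z \<otimes> (z \<otimes> (conjugate g z \<otimes> conjugate g z))"
proof -
  have orbit: "(z \<otimes> conjugate g z) \<otimes> conjugate g (conjugate g z) = \<one>"
    using conjugate_orbit_product[OF g _ N_cube[OF z]] z by simp
  have "conjugate g (conjugate g z) = inv (z \<otimes> conjugate g z)"
    using inv_equality[OF inv_comm[OF orbit]] g z by simp
  also have "\<dots> = inv (conjugate g z) \<otimes> inv z"
    using g z by (simp add: inv_mult_group)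
  also have "\<dots> = (z \<otimes> z) \<otimes> (conjugate g z \<otimes> conjugate g z)"
    using g z N_commute[of "conjugate g z \<otimes> conjugate g z" "z \<otimes> z"] by (simp add: N_inv_eq_square)
  finally show ?thesis
    using g z by (simp add: m_assoc)
qed

text \<open>Written additively on \<open>N\<close>, \<open>commutator g\<close> is the linear map \<open>g - 1\<close>.\<close>

lemmas commutator_N_simps =
  commutator_eq_conjugate_mult_inv conjugate_mult conjugate_inv conjugate_conjugate_N N_normalize

lemma commutator_mult_right:
  "g \<in> carrier G \<Longrightarrow> z \<in> N \<Longrightarrow> w \<in> N \<Longrightarrow>
    commutator g (z \<otimes> w) = commutator g z \<otimes> commutator g w"
  by (simp add: commutator_N_simps)

lemma commutator_inv_right:
  "g \<in> carrier G \<Longrightarrow> z \<in> N \<Longrightarrow> commutator g (inv z) = inv (commutator g z)"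
  by (simp add: commutator_N_simps)

lemma commutator_commutator_self:
  "g \<in> carrier G \<Longrightarrow> z \<in> N \<Longrightarrow> commutator g (commutator g z) = \<one>"
  by (simp add: commutator_N_simps)

lemma commutator_mult_left:
  "g \<in> carrier G \<Longrightarrow> h \<in> carrier G \<Longrightarrow> z \<in> N \<Longrightarrow>
    commutator (g \<otimes> h) z = commutator g (commutator h z) \<otimes> commutator g z \<otimes> commutator h z"
  by (simp add: commutator_N_simps conjugate_conjugate[symmetric])

lemma commutator_inv_left:
  assumes g: "g \<in> carrier G" and z: "z \<in> N"
  shows "commutator (inv g) z = inv (commutator g z)"
proof -
  define w where "w = conjugate (inv g) z"
  have w: "w \<in> N" using g z by (simp add: w_def)
  have "z = conjugate g w" using g z by (simp add: w_def conjugate_conjugate)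
  moreover have "conjugate (inv g) (conjugate g w) = w" using g w by (simp add: conjugate_conjugate)
  ultimately show ?thesis
    using g w by (simp add: commutator_N_simps)
qed

lemma commutator_anticommute:
  assumes a: "a \<in> carrier G" and b: "b \<in> carrier G" and z: "z \<in> N"
  shows "commutator a (commutator b z) \<otimes> commutator b (commutator a z) = \<one>"
proof -
  note simps = commutator_mult_left commutator_mult_right commutator_commutator_self
    commutator_inv_left N_normalize
  txt \<open>With \<open>A = a - 1\<close>, \<open>B = b - 1\<close> and \<open>A\<^sup>2 = B\<^sup>2 = 0\<close>:
    \<open>2 (ab - 1)\<^sup>2 + (ab\<^sup>-\<^sup>1 - 1)\<^sup>2 = ABA + AB + BA\<close> in characteristic 3.\<close>
  have key: "commutator a (commutator b (commutator a x)) \<otimes> commutator a (commutator b x)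
      \<otimes> commutator b (commutator a x) = \<one>" if x: "x \<in> N" for x
  proof -
    have "commutator a (commutator b (commutator a x)) \<otimes> commutator a (commutator b x)
        \<otimes> commutator b (commutator a x)
      = commutator (a \<otimes> b) (commutator (a \<otimes> b) x) \<otimes> commutator (a \<otimes> b) (commutator (a \<otimes> b) x)
        \<otimes> commutator (a \<otimes> inv b) (commutator (a \<otimes> inv b) x)"
      using a b x by (simp add: simps)
    also have "\<dots> = \<one>" using a b x by (simp add: commutator_commutator_self)
    finally show ?thesis .
  qed
  have "commutator a (commutator a (commutator b (commutator a z)) \<otimes> commutator a (commutator b z)
      \<otimes> commutator b (commutator a z)) = \<one>"
    using key[OF z] a by simp
  then have "commutator a (commutator b (commutator a z)) = \<one>"
    using a b z by (simp add: simps)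
  then show ?thesis using key[OF z] a b z by (simp add: m_assoc)
qed

end

lemma (in semi_3_abelian_group) elementary_abelian_normal_closure:
  assumes "y \<in> Omega1 G" shows "elementary_abelian_normal G (normal_closure y)"
proof -
  have y: "y \<in> carrier G" "y [^] (3::nat) = \<one>" using assms by (simp_all add: Omega1_eq)
  show ?thesis
    unfolding elementary_abelian_normal_def elementary_abelian_normal_axioms_def
    using semi_3_abelian_group_axioms normal_closure_normal[OF y(1)]
      normal_closure_cube_root_one[OF y] normal_closure_commute[OF y] by blast
qed

locale generated_elementary_abelian_normal = elementary_abelian_normal G N for G (structure) and N +
  fixes a :: "nat \<Rightarrow> 'a" and n :: nat
  assumes generators_carrier: "a ` {1..n} \<subseteq> carrier G"
    and generators_generate: "generate G (a ` {1..n}) = carrier G"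
begin

definition centralized_outside :: "nat set \<Rightarrow> 'a set" where
  "centralized_outside J = {z \<in> N. \<forall>l \<in> {1..n} - J. commutator (a l) z = \<one>}"

definition centralized_below :: "nat set \<Rightarrow> 'a set" where
  "centralized_below J = generate G (\<Union>j\<in>J. centralized_outside (J - {j}))"

lemma centralized_outside_subset: "centralized_outside J \<subseteq> N"
  by (auto simp: centralized_outside_def)

lemma centralized_outside_mono: "J' \<subseteq> J \<Longrightarrow> centralized_outside J' \<subseteq> centralized_outside J"
  by (auto simp: centralized_outside_def)

lemma centralized_below_subgroup: "subgroup (centralized_below J) G"
  unfolding centralized_below_def
  using centralized_outside_subset N.subset by (intro generate_is_subgroup) blast

lemma centralized_below_subset: "centralized_below J \<subseteq> N"
  unfolding centralized_below_def
  using centralized_outside_subset by (intro generate_subgroup_incl N.subgroup_axioms) blast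

lemma centralized_outside_subset_centralized_below:
  "j \<in> J \<Longrightarrow> centralized_outside (J - {j}) \<subseteq> centralized_below J"
  unfolding centralized_below_def by (auto intro: generate.incl)

lemma centralized_below_mono: "j \<in> J \<Longrightarrow> centralized_below (J - {j}) \<subseteq> centralized_below J"
  unfolding centralized_below_def
  by (rule mono_generate) (use centralized_outside_mono in blast)

lemma commutator_centralized_below:
  assumes g: "g \<in> carrier G"
    and step: "\<And>J z. z \<in> centralized_outside J \<Longrightarrow> commutator g z \<in> centralized_below J"
    and w: "w \<in> centralized_below J"
  shows "commutator g w \<in> centralized_below J"
  using w unfolding centralized_below_def
proof (induction w rule: generate.induct)
  case one
  then show ?case using g by (simp add: generate.one)
next
  case (incl h)
  then obtain j where "j \<in> J" "h \<in> centralized_outside (J - {j})" by blast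
  then show ?case using step centralized_below_mono unfolding centralized_below_def by blast
next
  case (inv h)
  then obtain j where j: "j \<in> J" "h \<in> centralized_outside (J - {j})" by blast
  then have "inv (commutator g h) \<in> centralized_below J"
    using step centralized_below_mono subgroup.m_inv_closed[OF centralized_below_subgroup] by blast
  moreover have "h \<in> N" using j centralized_outside_subset by blast
  ultimately show ?case using g by (simp add: commutator_inv_right centralized_below_def)
next
  case (eng h h')
  have "h \<in> N" "h' \<in> N"
    using eng.hyps centralized_below_subset unfolding centralized_below_def by blast+
  then show ?case using eng.IH g by (simp add: commutator_mult_right generate.eng)
qed

lemma commutator_generator_centralized_outside:
  assumes i: "i \<in> {1..n}" and z: "z \<in> centralized_outside J"
  shows "commutator (a i) z \<in> centralized_below J"
proof (cases "i \<in> J")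
  case False
  then show ?thesis
    using i z subgroup.one_closed[OF centralized_below_subgroup] by (auto simp: centralized_outside_def)
next
  case True
  have ai: "a i \<in> carrier G" using i generators_carrier by blast
  have zN: "z \<in> N" using z centralized_outside_subset by blast
  have "commutator (a l) (commutator (a i) z) = \<one>" if l: "l \<in> {1..n} - (J - {i})" for l
  proof (cases "l = i")
    case True
    then show ?thesis using ai zN by (simp add: commutator_commutator_self)
  next
    case False
    then have al: "a l \<in> carrier G" and "commutator (a l) z = \<one>"
      using l z generators_carrier by (auto simp: centralized_outside_def)
    then show ?thesis using commutator_anticommute[OF al ai zN] ai zN by simp
  qed
  then have "commutator (a i) z \<in> centralized_outside (J - {i})"
    using ai zN by (simp add: centralized_outside_def)
  then show ?thesis using centralized_outside_subset_centralized_below[OF True] by blast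
qed

lemma commutator_centralized_outside:
  assumes "g \<in> carrier G" shows "z \<in> centralized_outside J \<Longrightarrow> commutator g z \<in> centralized_below J"
  using assms unfolding generators_generate[symmetric]
proof (induction g arbitrary: J z rule: generate.induct)
  case one
  then have "z \<in> carrier G" using centralized_outside_subset N.mem_carrier by blast
  then show ?case using subgroup.one_closed[OF centralized_below_subgroup] by simp
next
  case (incl h)
  then show ?case using commutator_generator_centralized_outside by blast
next
  case (inv h)
  then obtain i where i: "i \<in> {1..n}" "h = a i" by blast
  then have "inv (commutator h z) \<in> centralized_below J"
    using commutator_generator_centralized_outside[OF i(1) inv.prems]
      subgroup.m_inv_closed[OF centralized_below_subgroup] by blast
  moreover have "h \<in> carrier G" "z \<in> N"
    using i generators_carrier inv.prems centralized_outside_subset by blast+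
  ultimately show ?case by (simp add: commutator_inv_left)
next
  case (eng h h')
  have h: "h \<in> carrier G" and h': "h' \<in> carrier G"
    using eng.hyps generate_in_carrier[OF generators_carrier] by blast+
  have z: "z \<in> N" using eng.prems centralized_outside_subset by blast
  have "commutator h (commutator h' z) \<in> centralized_below J"
    using commutator_centralized_below[OF h eng.IH(1) eng.IH(2)[OF eng.prems]] by blast
  then show ?case
    using eng.IH[OF eng.prems] subgroup.m_closed[OF centralized_below_subgroup]
    by (simp add: commutator_mult_left[OF h h' z])
qed

lemma centralized_outside_upper_central_Suc:
  assumes "centralized_below J \<subseteq> upper_central G k"
  shows "centralized_outside J \<subseteq> upper_central G (Suc k)"
proof
  fix z assume z: "z \<in> centralized_outside J"
  show "z \<in> upper_central G (Suc k)"
  proof (rule upper_central_SucI)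
    show "z \<in> carrier G" using z centralized_outside_subset N.mem_carrier by blast
    show "commutator g z \<in> upper_central G k" if "g \<in> carrier G" for g
      using commutator_centralized_outside[OF that z] assms by blast
  qed
qed

lemma centralized_outside_upper_central:
  "finite J \<Longrightarrow> centralized_outside J \<subseteq> upper_central G (Suc (card J))"
proof (induction "card J" arbitrary: J)
  case 0
  then have "centralized_below J \<subseteq> upper_central G (card J)"
    by (simp add: centralized_below_def generate_empty)
  then show ?case by (rule centralized_outside_upper_central_Suc)
next
  case (Suc k)
  have "centralized_outside (J - {j}) \<subseteq> upper_central G (card J)" if "j \<in> J" for j
    using Suc.hyps(1)[of "J - {j}"] Suc.hyps(2) Suc.prems that by simp
  then have "centralized_below J \<subseteq> upper_central G (card J)"
    unfolding centralized_below_def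
    by (intro generate_subgroup_incl normal_imp_subgroup[OF upper_central_normal]) blast
  then show ?case by (rule centralized_outside_upper_central_Suc)
qed

end

lemma (in semi_3_abelian_group) Omega1_centralized_upper_central:
  fixes a :: "nat \<Rightarrow> 'a"
  assumes gens: "a ` {1..n} \<subseteq> carrier G" "generate G (a ` {1..n}) = carrier G"
    and J: "finite J" and y: "y \<in> Omega1 G"
    and centralized: "\<And>l. l \<in> {1..n} - J \<Longrightarrow> commutator (a l) y = \<one>"
  shows "y \<in> upper_central G (Suc (card J))"
proof -
  interpret generated_elementary_abelian_normal G "normal_closure y" a n
    using elementary_abelian_normal_closure[OF y] gens
    by (simp add: generated_elementary_abelian_normal_def generated_elementary_abelian_normal_axioms_def)
  have "y \<in> centralized_outside J"
    using y centralized mem_normal_closure by (simp add: centralized_outside_def Omega1_eq)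
  then show ?thesis using centralized_outside_upper_central[OF J] by blast
qed

theorem lemma3p3:
  fixes G (structure) and a :: "nat \<Rightarrow> 'a" and n :: nat
  assumes "group G"
    and "finite (carrier G)"
    and "\<exists>k::nat. order G = 3 ^ k"
    and "semi_3_abelian G"
    and "a ` {1..n} \<subseteq> carrier G"
    and "generate G (a ` {1..n}) = carrier G"
    and "order (G Mod (Frattini G)) = 3 ^ n"
  shows "Omega1 G \<subseteq> upper_central G (n + 1)
    \<and> (\<forall>i m. 1 \<le> i \<and> i \<le> n \<and> 0 < m \<and> a i [^] (m::nat) \<in> Omega1 G
          \<longrightarrow> a i [^] m \<in> upper_central G n)"
proof (intro conjI subsetI allI impI)
  interpret semi_3_abelian_group G
    using assms(1,4) by (simp add: semi_3_abelian_group_def semi_3_abelian_group_axioms_def)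
  note gens = assms(5,6)
  show "x \<in> upper_central G (n + 1)" if "x \<in> Omega1 G" for x
    using Omega1_centralized_upper_central[OF gens _ that, of "{1..n}"] by simp
  fix i and m :: nat assume im: "1 \<le> i \<and> i \<le> n \<and> 0 < m \<and> a i [^] m \<in> Omega1 G"
  then have "a i \<in> carrier G" using gens(1) by auto
  then have "commutator (a i) (a i [^] m) = \<one>" by (rule commutator_nat_pow_self)
  then have "a i [^] m \<in> upper_central G (Suc (card ({1..n} - {i})))"
    using im by (intro Omega1_centralized_upper_central[OF gens]) auto
  then show "a i [^] m \<in> upper_central G n" using im by simp
qed

end
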